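(* Let $\mathbb{F}$ be a field and let $\mathcal{A}$ be a unital $\mathbb{F}$-algebra of dimension $n>2$. Then $l(\mathcal{A})=2^{n-2}$ if and only if $\mathcal{A}$ has a long basis $E=\{e_0,e_1,\ldots,e_{n-1}\}$ such that $e_pe_q\in\langle e_0,\ldots,e_{\max(p,q)}\rangle$ for all $p,q\in\{0,\ldots,n-1\}$ with $p\neq q$.
   Context: Algebras are finite-dimensional, unital, not necessarily associative. For a finite generating set $S$ of $\mathcal{A}$, a word in $S$ is any product (with any bracketing) of finitely many elements of $S$; its length is the number of factors, and $1$ is a word of length $0$. $L_i(S)$ is the linear span of all words in $S$ of length at most $i$. The length of $S$ is $l(S)=\min\{k\ge0: L_k(S)=\mathcal{A}\}$, and $l(\mathcal{A})=\max\{l(S): S\text{ a finite generating set of }\mathcal{A}\}$. (It is known that $2^{n-2}$ is the maximal possible length of such an algebra of dimension $n\ge2$.) A basis $\{e_0,e_1,\ldots,e_{n-1}\}$ of $\mathcal{A}$ is called long if $e_0=1$ and $e_i^2=e_{i+1}$ for $i=1,\ldots,n-2$. $\langle\cdot\rangle$ denotes linear span. *)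

theory Defs
  imports Complex_Main
begin

text \<open>A finite-dimensional unital, not necessarily associative algebra over a field 'k,
  with carrier type 'v, scalar multiplication sc, product mul and unit one.\<close>

definition unital_fd_algebra ::
  "('k::field \<Rightarrow> 'v::ab_group_add \<Rightarrow> 'v) \<Rightarrow> ('v \<Rightarrow> 'v \<Rightarrow> 'v) \<Rightarrow> 'v \<Rightarrow> bool" where
  "unital_fd_algebra sc mul one \<longleftrightarrow>
     vector_space sc \<and>
     (\<forall>z. Vector_Spaces.linear sc sc (\<lambda>x. mul x z)) \<and>
     (\<forall>x. Vector_Spaces.linear sc sc (\<lambda>z. mul x z)) \<and>
     (\<forall>x. mul one x = x \<and> mul x one = x) \<and>
     (\<exists>B. finite B \<and> module.span sc B = UNIV)"

definition alg_dim :: "('k::field \<Rightarrow> 'v::ab_group_add \<Rightarrow> 'v) \<Rightarrow> nat" where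
  "alg_dim sc = vector_space.dim sc (UNIV :: 'v set)"

text \<open>word mul one S w i: w is a word in S of length i (any bracketing; 1 has length 0)\<close>
inductive word :: "('v \<Rightarrow> 'v \<Rightarrow> 'v) \<Rightarrow> 'v \<Rightarrow> 'v set \<Rightarrow> 'v \<Rightarrow> nat \<Rightarrow> bool"
  for mul :: "'v \<Rightarrow> 'v \<Rightarrow> 'v" and one :: 'v and S :: "'v set" where
  word_one: "word mul one S one 0"
| word_gen: "s \<in> S \<Longrightarrow> word mul one S s 1"
| word_mul: "word mul one S u i \<Longrightarrow> word mul one S v j \<Longrightarrow> word mul one S (mul u v) (i + j)"

definition Lspan :: "('k::field \<Rightarrow> 'v::ab_group_add \<Rightarrow> 'v) \<Rightarrow> ('v \<Rightarrow> 'v \<Rightarrow> 'v) \<Rightarrow> 'v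
    \<Rightarrow> 'v set \<Rightarrow> nat \<Rightarrow> 'v set" where
  "Lspan sc mul one S i = module.span sc {w. \<exists>j\<le>i. word mul one S w j}"

definition gen_set :: "('k::field \<Rightarrow> 'v::ab_group_add \<Rightarrow> 'v) \<Rightarrow> ('v \<Rightarrow> 'v \<Rightarrow> 'v) \<Rightarrow> 'v
    \<Rightarrow> 'v set \<Rightarrow> bool" where
  "gen_set sc mul one S \<longleftrightarrow> finite S \<and> module.span sc {w. \<exists>j. word mul one S w j} = UNIV"

definition set_length :: "('k::field \<Rightarrow> 'v::ab_group_add \<Rightarrow> 'v) \<Rightarrow> ('v \<Rightarrow> 'v \<Rightarrow> 'v) \<Rightarrow> 'v
    \<Rightarrow> 'v set \<Rightarrow> nat" where
  "set_length sc mul one S = (LEAST k. Lspan sc mul one S k = UNIV)"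

text \<open>l(A): maximum of l(S) over finite generating sets (the set of values is bounded)\<close>
definition alg_length :: "('k::field \<Rightarrow> 'v::ab_group_add \<Rightarrow> 'v) \<Rightarrow> ('v \<Rightarrow> 'v \<Rightarrow> 'v) \<Rightarrow> 'v \<Rightarrow> nat" where
  "alg_length sc mul one = Sup {set_length sc mul one S | S. gen_set sc mul one S}"

definition long_basis :: "('k::field \<Rightarrow> 'v::ab_group_add \<Rightarrow> 'v) \<Rightarrow> ('v \<Rightarrow> 'v \<Rightarrow> 'v) \<Rightarrow> 'v
    \<Rightarrow> nat \<Rightarrow> (nat \<Rightarrow> 'v) \<Rightarrow> bool" where
  "long_basis sc mul one n e \<longleftrightarrow>
     inj_on e {..<n} \<and> \<not> module.dependent sc (e ` {..<n}) \<and>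
     module.span sc (e ` {..<n}) = UNIV \<and>
     e 0 = one \<and> (\<forall>i. 1 \<le> i \<and> i \<le> n - 2 \<longrightarrow> mul (e i) (e i) = e (i + 1))"

end

(*
  For a generating set S, if the word spans satisfy L(2m) <= L(m) (and L(1) <= L(m)), then
  L(m) is closed under multiplication and hence is the whole algebra. So every doubling of the
  word length adds a dimension until A is reached, and since dim L(1) >= 2 this gives
  L(2^(n-2)) = A, i.e. l(A) <= 2^(n-2).

  If l(S) = 2^(n-2), all these inequalities are tight: L(k) = L(2^j) has dimension j + 2 for
  2^j <= k < 2^(j+1). Taking a in L(1) - L(0) and e_i = a^(2^(i-1)), induction on i shows
  <e_0, ..., e_i> = L(2^(i-1)): a word of length 2^i is a product of two words of length at most
  2^i - 1, i.e. of elements of <e_0, ..., e_i>, and for p <> q the product e_p e_q has length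
  below 2^max(p,q), so it lies in L(2^max(p,q) - 1) = <e_0, ..., e_max(p,q)>. This is the
  triangular long basis.

  Conversely, for a triangular long basis the spaces V_t = <e_0, ..., e_t> satisfy
  V_(t-1) V_t + V_t V_(t-1) <= V_t for t <= n - 2, so every word in e_1 of length below 2^t
  lies in V_t; in particular L(2^(n-2) - 1) <= V_(n-2) is proper and l({e_1}) = 2^(n-2).
*)
theory Submission
  imports Defs
begin

locale unital_algebra = vector_space sc
  for sc :: "'k::field \<Rightarrow> 'v::ab_group_add \<Rightarrow> 'v" +
  fixes mul :: "'v \<Rightarrow> 'v \<Rightarrow> 'v" and one :: 'v
  assumes linear_mul_left: "Vector_Spaces.linear sc sc (\<lambda>x. mul x z)"
    and linear_mul_right: "Vector_Spaces.linear sc sc (\<lambda>z. mul x z)"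
    and mul_one_left [simp]: "mul one x = x"
    and mul_one_right [simp]: "mul x one = x"
begin

abbreviation L :: "'v set \<Rightarrow> nat \<Rightarrow> 'v set" where
  "L S k \<equiv> Lspan sc mul one S k"

lemma subspace_mul_left: "subspace T \<Longrightarrow> subspace {x. mul x y \<in> T}"
  using module_hom.subspace_vimage[OF module_hom_linearI[OF linear_mul_left]]
  by (simp add: vimage_def)

lemma subspace_mul_right: "subspace T \<Longrightarrow> subspace {y. mul x y \<in> T}"
  using module_hom.subspace_vimage[OF module_hom_linearI[OF linear_mul_right]]
  by (simp add: vimage_def)

lemma mul_span_in_subspace:
  assumes T: "subspace T" and AB: "\<And>x y. x \<in> A \<Longrightarrow> y \<in> B \<Longrightarrow> mul x y \<in> T"
    and x: "x \<in> span A" and y: "y \<in> span B"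
  shows "mul x y \<in> T"
proof -
  have "mul a y \<in> T" if "a \<in> A" for a
    using span_induct[OF y subspace_mul_right[OF T]] AB that by auto
  then show ?thesis
    using span_induct[OF x subspace_mul_left[OF T]] by auto
qed

lemma mul_0_left [simp]: "mul 0 y = 0"
  using module_hom.zero[OF module_hom_linearI[OF linear_mul_left]] by simp

lemma trivial_if_one_eq_0: "one = 0 \<Longrightarrow> (x :: 'v) = 0"
  using mul_one_left[of x] by simp

lemma word_0_eq_one: "word mul one S w k \<Longrightarrow> k = 0 \<Longrightarrow> w = one"
  by (induction rule: word.induct) auto

lemma word_in_L: "word mul one S w k \<Longrightarrow> w \<in> L S k"
  unfolding Lspan_def by (rule span_base) auto

lemma one_in_L: "one \<in> L S k"
  unfolding Lspan_def by (rule span_base) (auto intro: word.word_one)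

lemma L_mono: "i \<le> j \<Longrightarrow> L S i \<subseteq> L S j"
  unfolding Lspan_def by (rule span_mono) (auto intro: le_trans)

lemma subspace_L: "subspace (L S k)"
  unfolding Lspan_def by simp

lemma span_L [simp]: "span (L S k) = L S k"
  unfolding Lspan_def by (simp add: span_span)

lemma L_0: "L S 0 = span {one}"
proof -
  have "{w. \<exists>j\<le>0. word mul one S w j} = {one}"
    using word_0_eq_one[of S] word.word_one[of mul one S] by auto
  then show ?thesis unfolding Lspan_def by simp
qed

lemma mul_L:
  assumes "x \<in> L S i" and "y \<in> L S j"
  shows "mul x y \<in> L S (i + j)"
proof (rule mul_span_in_subspace[OF subspace_L])
  fix u v
  assume "u \<in> {w. \<exists>i'\<le>i. word mul one S w i'}" "v \<in> {w. \<exists>j'\<le>j. word mul one S w j'}"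
  then obtain i' j' where "i' \<le> i" "j' \<le> j" "word mul one S (mul u v) (i' + j')"
    by (auto intro: word.word_mul)
  then show "mul u v \<in> L S (i + j)"
    using word_in_L L_mono[of "i' + j'" "i + j" S] by auto
qed (use assms in \<open>simp_all add: Lspan_def\<close>)

text \<open>A word of length at most \<open>k + 1\<close> is, up to factors \<open>one\<close>, a product of two words of
  length at most \<open>k\<close>.\<close>

lemma L_Suc_subset:
  assumes "1 \<le> k" and T: "subspace T" "L S k \<subseteq> T"
    and mul_T: "\<And>x y. x \<in> L S k \<Longrightarrow> y \<in> L S k \<Longrightarrow> mul x y \<in> T"
  shows "L S (Suc k) \<subseteq> T"
proof -
  have "w \<in> T" if "word mul one S w i" "i \<le> Suc k" for w i
    using that
  proof (induction rule: word.induct)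
    case (word_mul u i v j)
    consider "i = 0" | "j = 0" | "i \<noteq> 0" "j \<noteq> 0" by blast
    then show ?case
    proof cases
      case 1
      then show ?thesis using word_mul word_0_eq_one[OF word_mul.hyps(1)] by simp
    next
      case 2
      then show ?thesis using word_mul word_0_eq_one[OF word_mul.hyps(2)] by simp
    next
      case 3
      then have "i \<le> k" "j \<le> k" using word_mul.prems by simp_all
      then have "u \<in> L S k" "v \<in> L S k"
        using word_mul.hyps[THEN word_in_L] L_mono[of _ k S] by blast+
      then show ?thesis by (rule mul_T)
    qed
  next
    case word_one
    then show ?case using one_in_L T(2) by blast
  next
    case (word_gen s)
    then show ?case using word_in_L[OF word.word_gen] L_mono[OF assms(1)] T(2) by blast
  qed
  then have "{w. \<exists>i\<le>Suc k. word mul one S w i} \<subseteq> T" by blast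
  then show ?thesis
    unfolding Lspan_def by (rule span_minimal[OF _ T(1)])
qed

lemma L_eq_UNIV_if_closed:
  assumes "gen_set sc mul one S" "L S 1 \<subseteq> L S m" "L S (2 * m) \<subseteq> L S m"
  shows "L S m = UNIV"
proof -
  have "w \<in> L S m" if "word mul one S w k" for w k
    using that
  proof (induction rule: word.induct)
    case (word_mul u i v j)
    then show ?case using mul_L[of u S m v m] assms(3) by (auto simp: mult_2)
  qed (use assms(2) one_in_L word_in_L[OF word.word_gen] in auto)
  then have "{w. \<exists>j. word mul one S w j} \<subseteq> L S m" by blast
  then have "span {w. \<exists>j. word mul one S w j} \<subseteq> L S m"
    by (rule span_minimal[OF _ subspace_L])
  then show ?thesis using assms(1) unfolding gen_set_def by auto
qed

end

locale fd_unital_algebra = unital_algebra sc mul one + finite_dimensional_vector_space sc Basis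
  for sc :: "'k::field \<Rightarrow> 'v::ab_group_add \<Rightarrow> 'v" and mul one and Basis :: "'v set"
begin

lemma alg_dim_eq: "alg_dim sc = dim (UNIV :: 'v set)"
  by (simp add: alg_dim_def)

lemma gen_set_Basis: "gen_set sc mul one Basis"
proof -
  have "Basis \<subseteq> {w. \<exists>j. word mul one Basis w j}" by (auto intro: word.word_gen)
  then show ?thesis
    using span_mono span_Basis finite_Basis unfolding gen_set_def by blast
qed

lemma dim_L_less: "L S i \<subset> L S j \<Longrightarrow> dim (L S i) < dim (L S j)"
  using dim_psubset[of "L S i" "L S j"] by simp

lemma dim_L_less_dim: "L S k \<noteq> UNIV \<Longrightarrow> dim (L S k) < dim (UNIV :: 'v set)"
  using dim_eq_full[of "L S k"] dim_subset_UNIV[of "L S k"] by (simp add: dimension_def)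

lemma dim_L_0:
  assumes "L S 0 \<noteq> UNIV" shows "dim (L S 0) = 1"
proof -
  have "one \<noteq> 0"
  proof
    assume "one = 0"
    then have "x \<in> L S 0" for x
      using trivial_if_one_eq_0[of x] subspace_0[OF subspace_L, of S 0] by simp
    then show False using assms by blast
  qed
  then show ?thesis using dim_eq_card_independent[of "{one}"] by (simp add: L_0)
qed

lemma L_0_psubset_L_1:
  assumes "gen_set sc mul one S" "L S 0 \<noteq> UNIV"
  shows "L S 0 \<subset> L S 1"
proof -
  have "\<not> L S 1 \<subseteq> L S 0" using L_eq_UNIV_if_closed[OF assms(1), of 0] assms(2) by auto
  moreover have "L S 0 \<subseteq> L S 1" by (rule L_mono) simp
  ultimately show ?thesis by blast
qed

lemma two_le_dim_L_1:
  assumes "gen_set sc mul one S" "L S 0 \<noteq> UNIV"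
  shows "2 \<le> dim (L S 1)"
proof -
  have "dim (L S 0) < dim (L S 1)" by (rule dim_L_less[OF L_0_psubset_L_1[OF assms]])
  then show ?thesis using dim_L_0[OF assms(2)] by simp
qed

lemma dim_L_double_pow:
  assumes "gen_set sc mul one S" "1 \<le> m" "L S (2 ^ i * m) \<noteq> UNIV"
  shows "dim (L S m) + i \<le> dim (L S (2 ^ i * m))"
  using assms(3)
proof (induction i)
  case (Suc i)
  have "L S (2 ^ i * m) \<subseteq> L S (2 ^ Suc i * m)" by (rule L_mono) simp
  then have not_full: "L S (2 ^ i * m) \<noteq> UNIV" using Suc.prems by auto
  have "L S 1 \<subseteq> L S (2 ^ i * m)"
    using assms(2) by (intro L_mono) (simp add: Suc_le_eq)
  then have "\<not> L S (2 * (2 ^ i * m)) \<subseteq> L S (2 ^ i * m)"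
    using L_eq_UNIV_if_closed[OF assms(1)] not_full by blast
  then have "L S (2 ^ i * m) \<subset> L S (2 ^ Suc i * m)"
    using \<open>L S (2 ^ i * m) \<subseteq> _\<close> by (auto simp: mult.assoc)
  then have "dim (L S (2 ^ i * m)) < dim (L S (2 ^ Suc i * m))" by (rule dim_L_less)
  then show ?case using Suc.IH[OF not_full] by simp
qed simp

lemma L_2pow_dim_eq_UNIV:
  assumes "gen_set sc mul one S"
  shows "L S (2 ^ (dim (UNIV :: 'v set) - 2)) = UNIV"
proof (cases "L S 0 = UNIV")
  case True
  then show ?thesis using L_mono[of 0 _ S] by blast
next
  case False
  show ?thesis
  proof (rule ccontr)
    assume not_full: "L S (2 ^ (dim (UNIV :: 'v set) - 2)) \<noteq> UNIV"
    then show False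
      using dim_L_double_pow[OF assms order_refl, of "dim (UNIV :: 'v set) - 2"]
        dim_L_less_dim[OF not_full] two_le_dim_L_1[OF assms False] by simp
  qed
qed

lemma set_length_le_iff:
  assumes "gen_set sc mul one S"
  shows "set_length sc mul one S \<le> k \<longleftrightarrow> L S k = UNIV"
proof
  assume "set_length sc mul one S \<le> k"
  moreover have "L S (set_length sc mul one S) = UNIV"
    unfolding set_length_def
    by (rule LeastI[where P = "\<lambda>k. L S k = UNIV", OF L_2pow_dim_eq_UNIV[OF assms]])
  ultimately show "L S k = UNIV" using L_mono[of _ k S] by blast
qed (simp add: set_length_def Least_le)

lemma alg_length_eq_2pow_iff:
  "alg_length sc mul one = 2 ^ (dim (UNIV :: 'v set) - 2) \<longleftrightarrow>
    (\<exists>S. gen_set sc mul one S \<and> L S (2 ^ (dim (UNIV :: 'v set) - 2) - 1) \<noteq> UNIV)"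
proof -
  define N :: nat where "N = 2 ^ (dim (UNIV :: 'v set) - 2)"
  define X where "X = {set_length sc mul one S | S. gen_set sc mul one S}"
  have le_N: "x \<le> N" if "x \<in> X" for x
    using that set_length_le_iff L_2pow_dim_eq_UNIV unfolding X_def N_def by auto
  then have "finite X" by (meson finite_atMost finite_subset subsetI atMost_iff)
  moreover have "X \<noteq> {}" using gen_set_Basis unfolding X_def by blast
  ultimately have "Sup X \<in> X" by (simp add: cSup_eq_Max)
  then have "Sup X = N \<longleftrightarrow> N \<in> X"
    using cSup_eq_maximum[of N X] le_N by auto
  also have "\<dots> \<longleftrightarrow> (\<exists>S. gen_set sc mul one S \<and> L S (N - 1) \<noteq> UNIV)"
  proof -
    have "1 \<le> N" unfolding N_def by simp
    moreover have "set_length sc mul one S \<le> N" if "gen_set sc mul one S" for S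
      using le_N that unfolding X_def by blast
    ultimately have "set_length sc mul one S = N \<longleftrightarrow> L S (N - 1) \<noteq> UNIV"
      if "gen_set sc mul one S" for S
      using that set_length_le_iff[OF that, of "N - 1"] by fastforce
    then show ?thesis unfolding X_def by blast
  qed
  finally show ?thesis
    unfolding alg_length_def X_def[symmetric] N_def .
qed

end

context finite_dimensional_vector_space
begin

lemma spanning_family_of_dim_is_basis:
  assumes "span (f ` {..<dim (UNIV :: 'b set)}) = UNIV"
  shows "inj_on f {..<dim (UNIV :: 'b set)} \<and> independent (f ` {..<dim (UNIV :: 'b set)})"
proof -
  let ?n = "dim (UNIV :: 'b set)"
  have "card (f ` {..<?n}) \<le> ?n" using card_image_le[of "{..<?n}" f] by simp
  moreover have "?n \<le> card (f ` {..<?n})" using dim_le_card[of UNIV "f ` {..<?n}"] assms by simp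
  ultimately show ?thesis
    using card_le_dim_spanning[of "f ` {..<?n}" UNIV] eq_card_imp_inj_on[of "{..<?n}" f] assms
    by auto
qed

end

text \<open>The candidate long basis \<open>e 0 = 1\<close>, \<open>e i = a ^ (2 ^ (i - 1))\<close> (repeated squaring);
  \<open>chain_degree i\<close> is the length of \<open>e i\<close> as a word in \<open>a\<close>.\<close>

definition square_chain :: "('v \<Rightarrow> 'v \<Rightarrow> 'v) \<Rightarrow> 'v \<Rightarrow> 'v \<Rightarrow> nat \<Rightarrow> 'v" where
  "square_chain mul one a i = (if i = 0 then one else ((\<lambda>x. mul x x) ^^ (i - 1)) a)"

definition chain_degree :: "nat \<Rightarrow> nat" where
  "chain_degree i = (if i = 0 then 0 else 2 ^ (i - 1))"

lemma square_chain_0 [simp]: "square_chain mul one a 0 = one"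
  and square_chain_1 [simp]: "square_chain mul one a (Suc 0) = a"
  by (simp_all add: square_chain_def)

lemma square_chain_Suc:
  "1 \<le> i \<Longrightarrow>
    square_chain mul one a (Suc i) = mul (square_chain mul one a i) (square_chain mul one a i)"
  by (cases i) (simp_all add: square_chain_def)

lemma chain_degree_0 [simp]: "chain_degree 0 = 0"
  and chain_degree_Suc [simp]: "chain_degree (Suc i) = 2 ^ i"
  by (simp_all add: chain_degree_def)

lemma chain_degree_mono: "i \<le> j \<Longrightarrow> chain_degree i \<le> chain_degree j"
  unfolding chain_degree_def by (auto intro: power_increasing)

lemma chain_degree_add_less:
  assumes "p \<noteq> q" shows "chain_degree p + chain_degree q < 2 ^ max p q"
proof -
  have less: "chain_degree i + chain_degree j < 2 ^ j" if "i < j" for i j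
  proof -
    obtain j' where j': "j = Suc j'" using \<open>i < j\<close> less_imp_Suc_add by blast
    have "chain_degree i < 2 ^ j'"
      using that j' by (cases i) (auto simp: chain_degree_def intro: power_strict_increasing)
    then show ?thesis using j' by simp
  qed
  show ?thesis
  proof (cases "p < q")
    case True
    then show ?thesis using less[OF True] by (simp add: max_def)
  next
    case False
    then have "q < p" using assms by simp
    then show ?thesis using less[OF \<open>q < p\<close>] by (simp add: max_def add.commute)
  qed
qed

context unital_algebra
begin

lemma square_chain_in_L:
  assumes "a \<in> L S 1" shows "square_chain mul one a i \<in> L S (chain_degree i)"
proof (induction i)
  case 0
  then show ?case by (simp add: one_in_L)
next
  case (Suc i)
  show ?case
  proof (cases "i = 0")
    case True
    then show ?thesis using assms by simp
  next
    case False
    then obtain j where "i = Suc j" using not0_implies_Suc by blast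
    then show ?thesis using mul_L[OF Suc.IH Suc.IH] by (simp add: square_chain_Suc mult_2)
  qed
qed

lemma mul_square_chain_in_L:
  assumes "a \<in> L S 1" "p \<noteq> q"
  shows "mul (square_chain mul one a p) (square_chain mul one a q) \<in> L S (2 ^ max p q - 1)"
proof -
  have "chain_degree p + chain_degree q \<le> 2 ^ max p q - 1"
    using chain_degree_add_less[OF assms(2)] by linarith
  then show ?thesis
    using mul_L[OF square_chain_in_L[OF assms(1)] square_chain_in_L[OF assms(1)], of p q]
      L_mono[of _ "2 ^ max p q - 1" S] by blast
qed

end

locale maximal_length_generator = fd_unital_algebra sc mul one Basis
  for sc :: "'k::field \<Rightarrow> 'v::ab_group_add \<Rightarrow> 'v" and mul one Basis +
  fixes S :: "'v set" and a :: 'v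
  assumes gen_set_S: "gen_set sc mul one S"
    and L_not_UNIV: "L S (2 ^ (dim (UNIV :: 'v set) - 2) - 1) \<noteq> UNIV"
    and dim_gt_2: "2 < dim (UNIV :: 'v set)"
    and a_in_L_1: "a \<in> L S 1" and a_notin_L_0: "a \<notin> L S 0"
begin

abbreviation e :: "nat \<Rightarrow> 'v" where
  "e \<equiv> square_chain mul one a"

lemma L_below_2pow_not_UNIV:
  assumes "k < 2 ^ (dim (UNIV :: 'v set) - 2)" shows "L S k \<noteq> UNIV"
proof -
  have "k \<le> 2 ^ (dim (UNIV :: 'v set) - 2) - 1" using assms by linarith
  then show ?thesis using L_not_UNIV L_mono[of k _ S] by auto
qed

text \<open>Maximal length forces every doubling step to add exactly one dimension.\<close>

lemma dim_L_le:
  assumes "j + 3 \<le> dim (UNIV :: 'v set)" "1 \<le> k" "k < 2 ^ (j + 1)"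
  shows "dim (L S k) \<le> j + 2"
proof -
  define i where "i = dim (UNIV :: 'v set) - 3 - j"
  have "i + (j + 1) = dim (UNIV :: 'v set) - 2" using assms(1) unfolding i_def by simp
  then have "2 ^ i * 2 ^ (j + 1) = (2::nat) ^ (dim (UNIV :: 'v set) - 2)" by (metis power_add)
  moreover have "2 ^ i * k < 2 ^ i * 2 ^ (j + 1)" using assms(3) by simp
  ultimately have "2 ^ i * k < 2 ^ (dim (UNIV :: 'v set) - 2)" by simp
  then have not_UNIV: "L S (2 ^ i * k) \<noteq> UNIV" by (rule L_below_2pow_not_UNIV)
  show ?thesis
    using dim_L_double_pow[OF gen_set_S assms(2) not_UNIV] dim_L_less_dim[OF not_UNIV] assms(1)
    unfolding i_def by linarith
qed

lemma dim_L_2pow_ge: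
  assumes "j + 3 \<le> dim (UNIV :: 'v set)"
  shows "j + 2 \<le> dim (L S (2 ^ j))"
proof -
  have "(2::nat) ^ j < 2 ^ (dim (UNIV :: 'v set) - 2)"
    using assms by (intro power_strict_increasing) auto
  then have not_UNIV: "L S (2 ^ j * 1) \<noteq> UNIV" using L_below_2pow_not_UNIV by simp
  have "L S 0 \<noteq> UNIV" using a_notin_L_0 by blast
  then show ?thesis
    using dim_L_double_pow[OF gen_set_S order_refl not_UNIV] two_le_dim_L_1[OF gen_set_S] by simp
qed

lemma L_eq_L_2pow:
  assumes "j + 3 \<le> dim (UNIV :: 'v set)" "2 ^ j \<le> k" "k < 2 ^ (j + 1)"
  shows "L S k = L S (2 ^ j)"
proof -
  have "1 \<le> k" using assms(2) order.trans one_le_power by fastforce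
  then have "dim (L S k) \<le> dim (L S (2 ^ j))"
    using dim_L_le[OF assms(1) _ assms(3)] dim_L_2pow_ge[OF assms(1)] by fastforce
  then have "span (L S (2 ^ j)) = span (L S k)"
    using dim_eq_span L_mono[OF assms(2)] by blast
  then show ?thesis by simp
qed

lemma L_2pow_minus_1:
  assumes "1 \<le> m" "m + 2 \<le> dim (UNIV :: 'v set)"
  shows "L S (2 ^ m - 1) = L S (2 ^ (m - 1))"
proof -
  obtain j where m: "m = Suc j" using assms(1) not0_implies_Suc by fastforce
  have "(1::nat) \<le> 2 ^ j" by simp
  then show ?thesis using L_eq_L_2pow[of j "2 ^ m - 1"] assms(2) m by simp
qed

lemma span_square_chain_1: "span (e ` {0..1}) = L S 1"
proof -
  have chain_01: "e ` {0..1} = {one, a}" by (auto simp: atLeast0_atMost_Suc)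
  have "a \<notin> span {one}" using a_notin_L_0 by (simp add: L_0)
  moreover have "one \<noteq> 0" using trivial_if_one_eq_0 a_notin_L_0 subspace_0[OF subspace_L] by metis
  ultimately have "independent {one, a}"
    by (simp add: independent_insert insert_commute)
  moreover have "a \<noteq> one" using a_notin_L_0 one_in_L by blast
  ultimately have "dim {one, a} = 2" by (simp add: dim_eq_card_independent)
  moreover have "{one, a} \<subseteq> L S 1" using a_in_L_1 one_in_L by blast
  moreover have "dim (L S 1) \<le> 2" using dim_L_le[of 0 1] dim_gt_2 by simp
  ultimately have "span {one, a} = span (L S 1)" by (intro dim_eq_span) simp_all
  then show ?thesis using chain_01 by simp
qed

lemma span_square_chain_Suc:
  assumes "1 \<le> i" "i + 2 \<le> dim (UNIV :: 'v set)"
    and IH: "span (e ` {0..i}) = L S (2 ^ (i - 1))"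
  shows "span (e ` {0..Suc i}) = L S (2 ^ i)"
proof
  let ?V = "span (e ` {0..Suc i})"
  have L_pred: "L S (2 ^ i - 1) = span (e ` {0..i})"
    using L_2pow_minus_1[OF assms(1,2)] IH by simp
  also have "\<dots> \<subseteq> ?V" by (intro span_mono) auto
  finally have L_pred_V: "L S (2 ^ i - 1) \<subseteq> ?V" .
  have basis_products: "mul (e r) (e s) \<in> ?V" if "r \<le> i" "s \<le> i" for r s
  proof (cases "r = s")
    case True
    have "mul (e r) (e r) = e (if r = 0 then 0 else Suc r)"
      using square_chain_Suc[of r mul one a] by simp
    moreover have "(if r = 0 then 0 else Suc r) \<in> {0..Suc i}" using that by simp
    ultimately have "mul (e r) (e r) \<in> e ` {0..Suc i}" by (metis imageI)
    then show ?thesis using True by (blast intro: span_base)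
  next
    case False
    have "(2::nat) ^ max r s \<le> 2 ^ i" using that by (simp add: power_increasing)
    then have "2 ^ max r s - 1 \<le> 2 ^ i - (1::nat)" by (rule diff_le_mono)
    then show ?thesis
      using mul_square_chain_in_L[OF a_in_L_1 False] L_mono L_pred_V by blast
  qed
  have "mul x y \<in> ?V" if "x \<in> L S (2 ^ i - 1)" "y \<in> L S (2 ^ i - 1)" for x y
  proof (rule mul_span_in_subspace[OF subspace_span])
    show "x \<in> span (e ` {0..i})" "y \<in> span (e ` {0..i})" using that L_pred by simp_all
  qed (use basis_products in auto)
  moreover have "(2::nat) \<le> 2 ^ i" using assms(1) power_increasing[of 1 i "2::nat"] by simp
  then have "1 \<le> 2 ^ i - (1::nat)" by simp
  ultimately have "L S (Suc (2 ^ i - 1)) \<subseteq> ?V"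
    using L_Suc_subset[OF _ subspace_span L_pred_V] by blast
  then show "L S (2 ^ i) \<subseteq> ?V" by simp
next
  have "e r \<in> L S (2 ^ i)" if "r \<le> Suc i" for r
    using square_chain_in_L[OF a_in_L_1, of r] chain_degree_mono[OF that] L_mono by auto
  then show "span (e ` {0..Suc i}) \<subseteq> L S (2 ^ i)"
    by (intro span_minimal subspace_L) auto
qed

lemma span_square_chain:
  "1 \<le> i \<Longrightarrow> i < dim (UNIV :: 'v set) \<Longrightarrow> span (e ` {0..i}) = L S (2 ^ (i - 1))"
proof (induction i rule: dec_induct)
  case base
  then show ?case using span_square_chain_1 by simp
next
  case (step i)
  then show ?case using span_square_chain_Suc[of i] by simp
qed

lemma span_square_chain_UNIV: "span (e ` {0..dim (UNIV :: 'v set) - 1}) = UNIV"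
  using span_square_chain[of "dim (UNIV :: 'v set) - 1"] dim_gt_2 L_2pow_dim_eq_UNIV[OF gen_set_S]
  by (simp add: numeral_2_eq_2)

lemma square_chain_triangular:
  assumes "p < dim (UNIV :: 'v set)" "q < dim (UNIV :: 'v set)" "p \<noteq> q"
  shows "mul (e p) (e q) \<in> span (e ` {0..max p q})"
proof (cases "max p q = dim (UNIV :: 'v set) - 1")
  case True
  then show ?thesis using span_square_chain_UNIV by simp
next
  case False
  then have m: "1 \<le> max p q" "max p q + 2 \<le> dim (UNIV :: 'v set)" using assms by auto
  then have "L S (2 ^ max p q - 1) = span (e ` {0..max p q})"
    using L_2pow_minus_1[OF m] span_square_chain[of "max p q"] assms(1,2) by simp
  then show ?thesis using mul_square_chain_in_L[OF a_in_L_1 assms(3)] by simp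
qed

lemma square_chain_long_basis: "long_basis sc mul one (dim (UNIV :: 'v set)) e"
proof -
  have "{..<dim (UNIV :: 'v set)} = {0..dim (UNIV :: 'v set) - 1}" using dim_gt_2 by auto
  then have "span (e ` {..<dim (UNIV :: 'v set)}) = UNIV" using span_square_chain_UNIV by simp
  then show ?thesis
    using spanning_family_of_dim_is_basis square_chain_Suc[of _ mul one a]
    unfolding long_basis_def by simp
qed

end

locale triangular_long_basis = fd_unital_algebra sc mul one Basis
  for sc :: "'k::field \<Rightarrow> 'v::ab_group_add \<Rightarrow> 'v" and mul one Basis +
  fixes e :: "nat \<Rightarrow> 'v"
  assumes long_basis: "long_basis sc mul one (dim (UNIV :: 'v set)) e"
    and triangular: "\<And>p q. p < dim (UNIV :: 'v set) \<Longrightarrow> q < dim (UNIV :: 'v set) \<Longrightarrow> p \<noteq> q \<Longrightarrow>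
      mul (e p) (e q) \<in> span (e ` {0..max p q})"
begin

abbreviation V :: "nat \<Rightarrow> 'v set" where
  "V t \<equiv> span (e ` {0..t})"

lemma e_0: "e 0 = one"
  and e_sq: "1 \<le> i \<Longrightarrow> i \<le> dim (UNIV :: 'v set) - 2 \<Longrightarrow> mul (e i) (e i) = e (i + 1)"
  and e_independent: "independent (e ` {..<dim (UNIV :: 'v set)})"
  and e_inj: "inj_on e {..<dim (UNIV :: 'v set)}"
  and e_span: "span (e ` {..<dim (UNIV :: 'v set)}) = UNIV"
  using long_basis unfolding long_basis_def by auto

lemma e_in_V: "r \<le> t \<Longrightarrow> e r \<in> V t"
  by (rule span_base) auto

lemma V_mono: "s \<le> t \<Longrightarrow> V s \<subseteq> V t"
  by (rule span_mono) auto

lemma mul_V: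
  assumes "1 \<le> t" "t \<le> dim (UNIV :: 'v set) - 2" and x: "x \<in> V (t - 1)" and y: "y \<in> V t"
  shows "mul x y \<in> V t \<and> mul y x \<in> V t"
proof -
  have basis_products: "mul (e r) (e s) \<in> V t \<and> mul (e s) (e r) \<in> V t"
    if "r \<le> t - 1" "s \<le> t" for r s
  proof (cases "r = s")
    case False
    have "r < dim (UNIV :: 'v set)" "s < dim (UNIV :: 'v set)" "max r s \<le> t"
      using that assms(1,2) by auto
    then show ?thesis
      using False triangular[of r s] triangular[of s r] V_mono[of "max r s" t]
      by (auto simp: max.commute)
  next
    case True
    have "mul (e r) (e r) \<in> V t"
    proof (cases "r = 0")
      case True
      then show ?thesis using e_0 e_in_V[of 0 t] by simp
    next
      case False
      then show ?thesis using e_sq[of r] e_in_V[of "r + 1" t] that assms(1,2) by simp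
    qed
    then show ?thesis using True by simp
  qed
  have "mul x y \<in> V t" by (rule mul_span_in_subspace[OF subspace_span _ x y]) (use basis_products in auto)
  moreover have "mul y x \<in> V t" by (rule mul_span_in_subspace[OF subspace_span _ y x]) (use basis_products in auto)
  ultimately show ?thesis ..
qed

lemma word_in_V:
  assumes "word mul one {e 1} w k" "k < 2 ^ t" "t \<le> dim (UNIV :: 'v set) - 2"
  shows "w \<in> V t"
  using assms
proof (induction arbitrary: t rule: word.induct)
  case word_one
  then show ?case using e_0 e_in_V[of 0 t] by simp
next
  case (word_gen s)
  then have "1 \<le> t" by (cases t) auto
  then show ?case using word_gen e_in_V by simp
next
  case (word_mul u i v j)
  show ?case
  proof (cases t)
    case 0
    then have "u = one" "v = one" using word_mul word_0_eq_one by auto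
    then show ?thesis using e_0 e_in_V[of 0 t] by simp
  next
    case (Suc t')
    have "t' \<le> dim (UNIV :: 'v set) - 2" using Suc word_mul.prems(2) by simp
    then have "i < 2 ^ t' \<Longrightarrow> u \<in> V t'" "j < 2 ^ t' \<Longrightarrow> v \<in> V t'"
      using word_mul.IH by simp_all
    moreover have "i < 2 ^ t' \<or> j < 2 ^ t'" using Suc word_mul.prems(1) by auto
    moreover have "u \<in> V t" "v \<in> V t" using word_mul.IH word_mul.prems by auto
    ultimately show ?thesis using mul_V[of t] Suc word_mul.prems(2) by auto
  qed
qed

lemma V_not_UNIV:
  assumes "2 \<le> dim (UNIV :: 'v set)"
  shows "V (dim (UNIV :: 'v set) - 2) \<noteq> UNIV"
proof
  let ?n = "dim (UNIV :: 'v set)"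
  assume V_UNIV: "V (?n - 2) = UNIV"
  have "e x \<noteq> e (?n - 1)" if "x \<le> ?n - 2" for x
    using inj_on_eq_iff[OF e_inj, of x "?n - 1"] that assms by auto
  then have "e ` {0..?n - 2} \<subseteq> e ` {..<?n} - {e (?n - 1)}" using assms by fastforce
  then have "e (?n - 1) \<in> span (e ` {..<?n} - {e (?n - 1)})"
    using span_mono V_UNIV by blast
  moreover have "e (?n - 1) \<in> e ` {..<?n}" using assms by simp
  ultimately show False
    using e_independent unfolding dependent_def by blast
qed

lemma square_chain_word:
  "i < dim (UNIV :: 'v set) \<Longrightarrow> word mul one {e 1} (e i) (chain_degree i)"
proof (induction i)
  case 0
  then show ?case using e_0 word.word_one by simp
next
  case (Suc i)
  show ?case
  proof (cases "i = 0")
    case True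
    then show ?thesis using word.word_gen[of "e 1" "{e 1}"] by simp
  next
    case False
    then obtain j where j: "i = Suc j" using not0_implies_Suc by blast
    have "e (Suc i) = mul (e i) (e i)" using e_sq[of i] Suc.prems False by simp
    moreover have "chain_degree (Suc i) = chain_degree i + chain_degree i"
      using j by simp
    ultimately show ?thesis using word.word_mul Suc by simp
  qed
qed

lemma gen_set_e_1: "gen_set sc mul one {e 1}"
proof -
  have "e ` {..<dim (UNIV :: 'v set)} \<subseteq> {w. \<exists>j. word mul one {e 1} w j}"
    using square_chain_word by blast
  then show ?thesis
    using span_mono[of "e ` {..<dim (UNIV :: 'v set)}"] e_span unfolding gen_set_def by auto
qed

lemma L_e_1_not_UNIV:
  assumes "2 \<le> dim (UNIV :: 'v set)"
  shows "L {e 1} (2 ^ (dim (UNIV :: 'v set) - 2) - 1) \<noteq> UNIV"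
proof -
  have "k < 2 ^ (dim (UNIV :: 'v set) - 2)" if "k \<le> 2 ^ (dim (UNIV :: 'v set) - 2) - 1" for k :: nat
    using that zero_less_power[of "2::nat" "dim (UNIV :: 'v set) - 2"] by linarith
  then have "{w. \<exists>j\<le>2 ^ (dim (UNIV :: 'v set) - 2) - 1. word mul one {e 1} w j}
      \<subseteq> V (dim (UNIV :: 'v set) - 2)"
    using word_in_V by blast
  then have "L {e 1} (2 ^ (dim (UNIV :: 'v set) - 2) - 1) \<subseteq> V (dim (UNIV :: 'v set) - 2)"
    unfolding Lspan_def by (rule span_minimal[OF _ subspace_span])
  then show ?thesis using V_not_UNIV[OF assms] by auto
qed

end

lemma unital_fd_algebra_obtain_Basis:
  assumes "unital_fd_algebra sc mul one"
  obtains Basis where "fd_unital_algebra sc mul one Basis"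
proof -
  have vs: "vector_space sc" and "\<exists>B. finite B \<and> module.span sc B = UNIV"
    using assms unfolding unital_fd_algebra_def by simp_all
  interpret vector_space sc by (rule vs)
  obtain B where B: "finite B" "span B = UNIV" using \<open>\<exists>B. _\<close> by blast
  obtain Basis where Basis: "Basis \<subseteq> B" "independent Basis" "B \<subseteq> span Basis"
    using basis_exists[of B] by metis
  have "span Basis = UNIV" using B(2) span_minimal[OF Basis(3)] by auto
  moreover have "finite Basis" using B(1) Basis(1) finite_subset by blast
  ultimately have "finite_dimensional_vector_space sc Basis"
    using Basis(2)
    by (intro finite_dimensional_vector_space.intro[OF vs] finite_dimensional_vector_space_axioms.intro)
  moreover have "unital_algebra sc mul one"
    using assms unfolding unital_fd_algebra_def unital_algebra_def unital_algebra_axioms_def by blast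
  ultimately show thesis by (intro that fd_unital_algebra.intro)
qed

lemma (in fd_unital_algebra) maximal_length_iff_triangular_long_basis:
  assumes dim_gt_2: "2 < dim (UNIV :: 'v set)"
  shows "(\<exists>S. gen_set sc mul one S \<and> L S (2 ^ (dim (UNIV :: 'v set) - 2) - 1) \<noteq> UNIV) \<longleftrightarrow>
    (\<exists>e. long_basis sc mul one (dim (UNIV :: 'v set)) e \<and>
       (\<forall>p<dim (UNIV :: 'v set). \<forall>q<dim (UNIV :: 'v set). p \<noteq> q \<longrightarrow>
          mul (e p) (e q) \<in> span (e ` {0..max p q})))"
    (is "?maximal \<longleftrightarrow> ?triangular")
proof
  assume ?maximal
  then obtain S where S: "gen_set sc mul one S" "L S (2 ^ (dim (UNIV :: 'v set) - 2) - 1) \<noteq> UNIV"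
    by blast
  then have "L S 0 \<noteq> UNIV" using L_mono[of 0 "2 ^ (dim UNIV - 2) - 1" S] by auto
  then obtain a where "a \<in> L S 1" "a \<notin> L S 0" using L_0_psubset_L_1[OF S(1)] by blast
  then interpret maximal_length_generator sc mul one Basis S a
    using S dim_gt_2 by unfold_locales
  show ?triangular
    using square_chain_long_basis square_chain_triangular by (intro exI[of _ e]) simp
next
  assume ?triangular
  then obtain e where "long_basis sc mul one (dim UNIV) e"
    "\<forall>p<dim UNIV. \<forall>q<dim UNIV. p \<noteq> q \<longrightarrow> mul (e p) (e q) \<in> span (e ` {0..max p q})"
    by blast
  then interpret triangular_long_basis sc mul one Basis e
    by unfold_locales auto
  show ?maximal
    using gen_set_e_1 L_e_1_not_UNIV dim_gt_2 by (intro exI[of _ "{e 1}"]) simp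
qed

theorem theorem6p5:
  fixes sc :: "'k::field \<Rightarrow> 'v::ab_group_add \<Rightarrow> 'v"
    and mul :: "'v \<Rightarrow> 'v \<Rightarrow> 'v" and one :: 'v
  assumes "unital_fd_algebra sc mul one"
    and "alg_dim sc > 2"
  shows "alg_length sc mul one = 2 ^ (alg_dim sc - 2) \<longleftrightarrow>
    (\<exists>e. long_basis sc mul one (alg_dim sc) e \<and>
       (\<forall>p<alg_dim sc. \<forall>q<alg_dim sc. p \<noteq> q \<longrightarrow>
          mul (e p) (e q) \<in> module.span sc (e ` {0..max p q})))"
proof -
  obtain Basis where "fd_unital_algebra sc mul one Basis"
    using unital_fd_algebra_obtain_Basis[OF assms(1)] .
  then interpret fd_unital_algebra sc mul one Basis .
  show ?thesis
    using alg_length_eq_2pow_iff maximal_length_iff_triangular_long_basis assms(2)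
    unfolding alg_dim_eq by simp
qed

end
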